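(* Let $\mathcal{G}=\langle S,A,T,s_0,F\rangle$ be a two-player turn-based deterministic reachability game. For every subset $Z\subseteq\mathrm{Win}_2(\mathcal{G},F)\setminus F$, we have $\mathrm{DSWin}_1(Z,\emptyset)\subseteq\mathrm{DSWin}_1(\emptyset,Z)$.
   Context: A two-player turn-based deterministic reachability game is a tuple $\mathcal{G}=\langle S,A,T,s_0,F\rangle$: $S$ finite, partitioned into P1 states $S_1$ and P2 states $S_2$; $A=A_1\cup A_2$ (P1 and P2 actions); $T:(S_1\times A_1)\cup(S_2\times A_2)\to S$ deterministic, possibly partial ($a$ enabled at $s$ iff $T(s,a)$ defined; every state has an enabled action); $s_0$ initial; $F\subseteq S$ a set of sink states (P2's goal). For a target $R\subseteq S$: $Z_0=R$, $Z_{k+1}=Z_k\cup\{s\in S_1:T(s,a)\in Z_k\ \forall\text{ enabled }a\}\cup\{s\in S_2:T(s,a)\in Z_k\text{ for some enabled }a\}$; $\mathrm{Win}_2(\mathcal{G},R)=\bigcup_kZ_k$; $\mathrm{rank}_{\mathcal{G},R}(s)=\min\{k:s\in Z_k\}$ ($\infty$ if none). For disjoint $X,Y\subseteq\mathrm{Win}_2(\mathcal{G},F)\setminus F$ (traps $X$, fake targets $Y$): the true game $\mathcal{G}^1_{X,Y}$ has states $S$, transitions $T_{X,Y}(q,a)=T(q,a)$ if $q\notin X\cup Y$ and $T_{X,Y}(q,a)=q$ if $q\in X\cup Y$; P2's perceptual game $\mathcal{G}^2_{X,Y}$ has transitions $T$ and goal $F\cup Y$, with $\mathrm{rank}_{\mathcal{G}^2_{X,Y}}:=\mathrm{rank}_{\mathcal{G},F\cup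 Y}$. Subjectively rationalizable actions: for $q\in S_2\cap\mathrm{Win}_2(\mathcal{G},F)\setminus(F\cup Y)$, $\mathsf{SRActs}_{X,Y}(q)=\{a\text{ enabled}:\mathrm{rank}_{\mathcal{G}^2_{X,Y}}(T(q,a))<\mathrm{rank}_{\mathcal{G}^2_{X,Y}}(q)\}$; at every other state, all enabled actions. A memoryless deterministic strategy of either player is subjectively rationalizable if it picks an action in $\mathsf{SRActs}_{X,Y}(q)$ at each of that player's states $q$. A memoryless deterministic P1 strategy $\pi_1$ is stealthy deceptive sure winning at $s$ if it is subjectively rationalizable and, for every subjectively rationalizable memoryless deterministic P2 strategy $\pi_2$, every path from $s$ generated by $(\pi_1,\pi_2)$ in the true game $\mathcal{G}^1_{X,Y}$ visits $X\cup Y$ within finitely many steps. $\mathrm{DSWin}_1(X,Y)$ is the set of states at which P1 has a stealthy deceptive sure winning strategy. *)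

theory Defs
  imports Main "HOL-Library.Extended_Nat"
begin

text \<open>Two-player turn-based deterministic reachability game
  G = (S, A, T, s0, F), with S partitioned into S1 (P1) and S2 (P2),
  A = A1 \<union> A2, and a partial deterministic transition function T
  (None = action not enabled).\<close>

record ('s, 'a) game =
  St  :: "'s set"
  S1  :: "'s set"
  S2  :: "'s set"
  A1  :: "'a set"
  A2  :: "'a set"
  Tr  :: "'s \<Rightarrow> 'a \<Rightarrow> 's option"
  s0  :: "'s"
  Fin :: "'s set"

definition enabled :: "('s, 'a) game \<Rightarrow> 's \<Rightarrow> 'a \<Rightarrow> bool" where
  "enabled G s a \<longleftrightarrow> Tr G s a \<noteq> None"

definition wf_game :: "('s, 'a) game \<Rightarrow> bool" where
  "wf_game G \<longleftrightarrow>
     finite (St G) \<and> S1 G \<union> S2 G = St G \<and> S1 G \<inter> S2 G = {} \<and>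
     (\<forall>s a. Tr G s a \<noteq> None \<longrightarrow> (s \<in> S1 G \<and> a \<in> A1 G) \<or> (s \<in> S2 G \<and> a \<in> A2 G)) \<and>
     (\<forall>s a t. Tr G s a = Some t \<longrightarrow> t \<in> St G) \<and>
     (\<forall>s \<in> St G. \<exists>a. enabled G s a) \<and>
     s0 G \<in> St G \<and> Fin G \<subseteq> St G \<and>
     \<comment> \<open>states in F are sinks\<close>
     (\<forall>f \<in> Fin G. \<forall>a t. Tr G f a = Some t \<longrightarrow> t = f)"

fun attr :: "('s, 'a) game \<Rightarrow> 's set \<Rightarrow> nat \<Rightarrow> 's set" where
  "attr G R 0 = R"
| "attr G R (Suc k) = attr G R k
     \<union> {s \<in> S1 G. \<forall>a t. Tr G s a = Some t \<longrightarrow> t \<in> attr G R k}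
     \<union> {s \<in> S2 G. \<exists>a t. Tr G s a = Some t \<and> t \<in> attr G R k}"

definition Win2 :: "('s, 'a) game \<Rightarrow> 's set \<Rightarrow> 's set" where
  "Win2 G R = (\<Union>k. attr G R k)"

definition rank :: "('s, 'a) game \<Rightarrow> 's set \<Rightarrow> 's \<Rightarrow> enat" where
  "rank G R s = (if \<exists>k. s \<in> attr G R k then enat (LEAST k. s \<in> attr G R k) else \<infinity>)"

text \<open>Subjectively rationalizable actions (perceptual game: transitions T, goal F \<union> Y).\<close>
definition SRActs :: "('s, 'a) game \<Rightarrow> 's set \<Rightarrow> 's set \<Rightarrow> 's \<Rightarrow> 'a set" where
  "SRActs G X Y q =
     (if q \<in> S2 G \<inter> Win2 G (Fin G) - (Fin G \<union> Y)
      then {a. \<exists>t. Tr G q a = Some t \<and> rank G (Fin G \<union> Y) t < rank G (Fin G \<union> Y) q}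
      else {a. enabled G q a})"

definition sr_strategy1 :: "('s, 'a) game \<Rightarrow> 's set \<Rightarrow> 's set \<Rightarrow> ('s \<Rightarrow> 'a) \<Rightarrow> bool" where
  "sr_strategy1 G X Y \<pi> \<longleftrightarrow> (\<forall>q \<in> S1 G. \<pi> q \<in> SRActs G X Y q)"

definition sr_strategy2 :: "('s, 'a) game \<Rightarrow> 's set \<Rightarrow> 's set \<Rightarrow> ('s \<Rightarrow> 'a) \<Rightarrow> bool" where
  "sr_strategy2 G X Y \<pi> \<longleftrightarrow> (\<forall>q \<in> S2 G. \<pi> q \<in> SRActs G X Y q)"

definition Tr_true :: "('s, 'a) game \<Rightarrow> 's set \<Rightarrow> 's set \<Rightarrow> 's \<Rightarrow> 'a \<Rightarrow> 's option" where
  "Tr_true G X Y q a =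
     (if q \<in> X \<union> Y then (if enabled G q a then Some q else None) else Tr G q a)"

definition is_play :: "('s, 'a) game \<Rightarrow> 's set \<Rightarrow> 's set \<Rightarrow> ('s \<Rightarrow> 'a) \<Rightarrow> ('s \<Rightarrow> 'a)
                        \<Rightarrow> 's \<Rightarrow> (nat \<Rightarrow> 's) \<Rightarrow> bool" where
  "is_play G X Y \<pi>1 \<pi>2 s \<rho> \<longleftrightarrow>
     \<rho> 0 = s \<and>
     (\<forall>n. Tr_true G X Y (\<rho> n) ((if \<rho> n \<in> S1 G then \<pi>1 else \<pi>2) (\<rho> n)) = Some (\<rho> (Suc n)))"

definition stealthy_dsw :: "('s, 'a) game \<Rightarrow> 's set \<Rightarrow> 's set \<Rightarrow> ('s \<Rightarrow> 'a) \<Rightarrow> 's \<Rightarrow> bool" where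
  "stealthy_dsw G X Y \<pi>1 s \<longleftrightarrow>
     sr_strategy1 G X Y \<pi>1 \<and>
     (\<forall>\<pi>2. sr_strategy2 G X Y \<pi>2 \<longrightarrow>
        (\<forall>\<rho>. is_play G X Y \<pi>1 \<pi>2 s \<rho> \<longrightarrow> (\<exists>n. \<rho> n \<in> X \<union> Y)))"

definition DSWin1 :: "('s, 'a) game \<Rightarrow> 's set \<Rightarrow> 's set \<Rightarrow> 's set" where
  "DSWin1 G X Y = {s \<in> St G. \<exists>\<pi>1. stealthy_dsw G X Y \<pi>1 s}"

end

theory Submission
  imports Defs
begin

text \<open>Let W be the attractor of Z for P1 in the game where P2 may only use the actions that are
  subjectively rationalizable when Z are fake targets. Inside W, P1's attractor strategy is stealthy
  deceptive sure winning for the fake targets Z. Outside W, P2 always has such an action leading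
  outside W again, and the crux is that this action is also rationalizable when Z are traps: outside
  W the rank towards F is at most the rank towards F \<union> Z (by induction on the attractor levels,
  since P2 can always choose its decreasing move outside W), while at every state it is at least
  that rank, so an action decreasing the rank towards F \<union> Z also decreases the rank towards F. Hence
  against any rationalizable P1 strategy for the traps Z, P2 keeps the play outside W \<supseteq> Z forever.\<close>

lemma finite_subset_UN_incseq:
  fixes f :: "nat \<Rightarrow> 'b set"
  assumes "finite A" "A \<subseteq> (\<Union>k. f k)" "incseq f"
  obtains K where "A \<subseteq> f K"
proof -
  have "f m \<subseteq> f n \<or> f n \<subseteq> f m" for m n
    using nat_le_linear[of m n] monoD[OF \<open>incseq f\<close>] by blast
  then have "subset.chain UNIV (range f)"
    unfolding subset.chain_def by blast
  then show thesis
    using finite_subset_Union_chain[of A "range f" UNIV] assms(1,2) that by blast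
qed

lemma wf_gameD:
  assumes "wf_game G"
  shows "finite (St G)" "S1 G \<union> S2 G = St G" "S1 G \<inter> S2 G = {}"
    and "Tr G s a = Some t \<Longrightarrow> t \<in> St G"
    and "s \<in> St G \<Longrightarrow> \<exists>a. enabled G s a"
  using assms unfolding wf_game_def by blast+

lemma wf_game_finite_successors:
  assumes "wf_game G"
  shows "finite {t. \<exists>a. Tr G x a = Some t}"
  using wf_gameD(1,4)[OF assms] by (blast intro: finite_subset)

subsection \<open>Attractors and ranks\<close>

lemma incseq_attr: "incseq (attr G R)"
  unfolding mono_iff_le_Suc by auto

lemma attr_mono_target: "R \<subseteq> R' \<Longrightarrow> attr G R k \<subseteq> attr G R' k"
  by (induction k) auto

lemma attr_subset: "attr G R k \<subseteq> R \<union> S1 G \<union> S2 G"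
  by (induction k) auto

lemma rank_le_enat_iff: "rank G R x \<le> enat k \<longleftrightarrow> x \<in> attr G R k"
proof (cases "\<exists>k. x \<in> attr G R k")
  case True
  define m where "m = (LEAST k. x \<in> attr G R k)"
  have "x \<in> attr G R m"
    unfolding m_def using True by (rule LeastI_ex)
  then have "m \<le> k \<longleftrightarrow> x \<in> attr G R k"
    using monoD[OF incseq_attr, of m k] Least_le[of "\<lambda>k. x \<in> attr G R k" k]
    unfolding m_def[symmetric] by (meson subsetD)
  with True show ?thesis
    unfolding rank_def m_def by simp
qed (auto simp: rank_def)

lemma rank_less_infinity_iff: "rank G R x < \<infinity> \<longleftrightarrow> x \<in> Win2 G R"
  by (auto simp: rank_def Win2_def)

lemma rank_le_rankI:
  assumes "\<And>k. x \<in> attr G R' k \<Longrightarrow> x \<in> attr G R k"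
  shows "rank G R x \<le> rank G R' x"
proof (cases "rank G R' x")
  case (enat k)
  then show ?thesis
    using assms rank_le_enat_iff[of G R' x k] rank_le_enat_iff[of G R x k] by simp
qed simp

lemma rank_antimono_target: "R \<subseteq> R' \<Longrightarrow> rank G R' x \<le> rank G R x"
  by (rule rank_le_rankI) (rule subsetD[OF attr_mono_target])

lemma rank_SucE:
  assumes "x \<in> Win2 G R" "x \<notin> R"
  obtains k where "rank G R x = enat (Suc k)" "x \<in> attr G R (Suc k)" "x \<notin> attr G R k"
proof -
  obtain n where n: "rank G R x = enat n"
    using assms(1) rank_less_infinity_iff[of G R x] by (cases "rank G R x") auto
  have "n \<noteq> 0"
    using n assms(2) rank_le_enat_iff[of G R x 0] by auto
  then obtain k where "n = Suc k"
    using not0_implies_Suc by blast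
  then show thesis
    using that n rank_le_enat_iff[of G R x] by (metis order_refl enat_ord_simps(1) not_less_eq_eq)
qed

lemma rank_less_if_attr: "rank G R x = enat (Suc k) \<Longrightarrow> t \<in> attr G R k \<Longrightarrow> rank G R t < rank G R x"
  using rank_le_enat_iff[of G R t k] by (simp add: le_less_trans)

lemma rank_decreases_universal:
  assumes "x \<in> S1 G" "x \<notin> S2 G" "x \<in> Win2 G R" "x \<notin> R" "Tr G x a = Some t"
  shows "rank G R t < rank G R x"
proof -
  obtain k where k: "rank G R x = enat (Suc k)" "x \<in> attr G R (Suc k)" "x \<notin> attr G R k"
    using rank_SucE[OF assms(3,4)] .
  then have "t \<in> attr G R k"
    using assms(1,2,5) by auto
  with k(1) show ?thesis
    by (rule rank_less_if_attr)
qed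

lemma rank_decreases_existential:
  assumes "x \<in> S2 G" "x \<notin> S1 G" "x \<in> Win2 G R" "x \<notin> R"
  obtains a t where "Tr G x a = Some t" "rank G R t < rank G R x"
proof -
  obtain k where k: "rank G R x = enat (Suc k)" "x \<in> attr G R (Suc k)" "x \<notin> attr G R k"
    using rank_SucE[OF assms(3,4)] .
  then have "\<exists>a t. Tr G x a = Some t \<and> t \<in> attr G R k"
    using assms(1,2) by auto
  then obtain a t where "Tr G x a = Some t" "t \<in> attr G R k"
    by blast
  with k(1) show thesis
    by (blast intro: that rank_less_if_attr)
qed

lemma rank_descent_reaches_target:
  assumes "\<rho> 0 \<in> Win2 G R"
    and "\<And>n. \<rho> n \<in> Win2 G R \<Longrightarrow> \<rho> n \<notin> R \<Longrightarrow> rank G R (\<rho> (Suc n)) < rank G R (\<rho> n)"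
  shows "\<exists>n. \<rho> n \<in> R"
proof (rule ccontr)
  assume "\<nexists>n. \<rho> n \<in> R"
  then have descent: "\<rho> n \<in> Win2 G R \<Longrightarrow> rank G R (\<rho> (Suc n)) < rank G R (\<rho> n)" for n
    using assms(2) by blast
  have win: "\<rho> n \<in> Win2 G R" for n
  proof (induction n)
    case (Suc n)
    have "rank G R (\<rho> (Suc n)) < rank G R (\<rho> n)"
      using descent[OF Suc] .
    also have "\<dots> < \<infinity>"
      using Suc by (rule rank_less_infinity_iff[THEN iffD2])
    finally show ?case
      by (rule rank_less_infinity_iff[THEN iffD1])
  qed (rule assms(1))
  have "(rank G R (\<rho> (Suc n)), rank G R (\<rho> n)) \<in> {(x, y). x < y}" for n
    using descent[OF win] by simp
  then show False
    using wf_no_infinite_down_chainE[OF wf, of "\<lambda>n. rank G R (\<rho> n)"] by blast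
qed

lemma subset_Win2: "R \<subseteq> Win2 G R"
  unfolding Win2_def using attr.simps(1)[of G R] by blast

lemma Win2_existential_closed:
  assumes "x \<in> S2 G" "Tr G x a = Some t" "t \<in> Win2 G R"
  shows "x \<in> Win2 G R"
proof -
  obtain k where "t \<in> attr G R k"
    using assms(3) unfolding Win2_def by blast
  then have "x \<in> attr G R (Suc k)"
    using assms(1,2) by auto
  then show ?thesis
    unfolding Win2_def by blast
qed

lemma Win2_universal_closed:
  assumes "x \<in> S1 G" "finite {t. \<exists>a. Tr G x a = Some t}"
    and "\<And>a t. Tr G x a = Some t \<Longrightarrow> t \<in> Win2 G R"
  shows "x \<in> Win2 G R"
proof -
  obtain K where "{t. \<exists>a. Tr G x a = Some t} \<subseteq> attr G R K"
    using finite_subset_UN_incseq[OF assms(2) _ incseq_attr] assms(3) unfolding Win2_def by blast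
  then have "x \<in> attr G R (Suc K)"
    using assms(1) by auto
  then show ?thesis
    unfolding Win2_def by blast
qed

lemma Win2_subset_Win2:
  assumes "\<And>x. finite {t. \<exists>a. Tr G x a = Some t}" "R \<subseteq> Win2 G R'"
  shows "Win2 G R \<subseteq> Win2 G R'"
proof -
  have "attr G R k \<subseteq> Win2 G R'" for k
  proof (induction k)
    case (Suc k)
    show ?case
    proof
      fix x
      assume "x \<in> attr G R (Suc k)"
      then consider "x \<in> attr G R k"
        | "x \<in> S1 G" "\<And>a t. Tr G x a = Some t \<Longrightarrow> t \<in> attr G R k"
        | a t where "x \<in> S2 G" "Tr G x a = Some t" "t \<in> attr G R k"
        by auto
      then show "x \<in> Win2 G R'"
        by cases (use Suc assms(1) in \<open>blast intro: Win2_existential_closed Win2_universal_closed\<close>)+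
    qed
  qed (simp add: assms(2))
  then show ?thesis
    unfolding Win2_def by blast
qed

text \<open>The fallback keeps the strategy enabled, which is all that rationalizability asks of P1.\<close>
definition rank_strategy :: "('s, 'a) game \<Rightarrow> 's set \<Rightarrow> 's \<Rightarrow> 'a" where
  "rank_strategy G R x =
     (if \<exists>a t. Tr G x a = Some t \<and> rank G R t < rank G R x
      then SOME a. \<exists>t. Tr G x a = Some t \<and> rank G R t < rank G R x
      else SOME a. enabled G x a)"

lemma rank_strategy_decreases:
  assumes "Tr G x a = Some t" "rank G R t < rank G R x"
  shows "\<exists>t. Tr G x (rank_strategy G R x) = Some t \<and> rank G R t < rank G R x"
  using assms someI_ex[of "\<lambda>a. \<exists>t. Tr G x a = Some t \<and> rank G R t < rank G R x"]
  unfolding rank_strategy_def by auto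

lemma rank_strategy_enabled:
  assumes "enabled G x a"
  shows "enabled G x (rank_strategy G R x)"
proof (cases "\<exists>a t. Tr G x a = Some t \<and> rank G R t < rank G R x")
  case True
  then show ?thesis
    using rank_strategy_decreases[of G x _ _ R] unfolding enabled_def by blast
next
  case False
  then show ?thesis
    using someI[of "enabled G x", OF assms] unfolding rank_strategy_def if_not_P[OF False] by simp
qed

lemma play_in_invariant:
  assumes "s \<in> A"
    and "\<And>x. x \<in> A \<Longrightarrow> \<exists>t\<in>A. Tr_true G X Y x ((if x \<in> S1 G then \<pi>1 else \<pi>2) x) = Some t"
  obtains \<rho> where "is_play G X Y \<pi>1 \<pi>2 s \<rho>" "\<And>n. \<rho> n \<in> A"
proof -
  define next_state where "next_state x =
      (SOME t. t \<in> A \<and> Tr_true G X Y x ((if x \<in> S1 G then \<pi>1 else \<pi>2) x) = Some t)" for x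
  have next_state: "next_state x \<in> A \<and>
      Tr_true G X Y x ((if x \<in> S1 G then \<pi>1 else \<pi>2) x) = Some (next_state x)" if "x \<in> A" for x
    unfolding next_state_def using someI_ex[OF assms(2)[OF that, unfolded Bex_def]] .
  define \<rho> where "\<rho> n = (next_state ^^ n) s" for n
  have "\<rho> n \<in> A" for n
    by (induction n) (simp_all add: \<rho>_def assms(1) next_state)
  moreover have "is_play G X Y \<pi>1 \<pi>2 s \<rho>"
    unfolding is_play_def using next_state calculation by (simp add: \<rho>_def)
  ultimately show thesis
    using that by blast
qed

lemma SRActs_enabled: "a \<in> SRActs G X Y q \<Longrightarrow> enabled G q a"
  unfolding SRActs_def enabled_def by (auto split: if_splits)

lemma SRActs_rank_less:
  assumes "q \<in> S2 G \<inter> Win2 G (Fin G) - (Fin G \<union> Y)" "a \<in> SRActs G X Y q" "Tr G q a = Some t"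
  shows "rank G (Fin G \<union> Y) t < rank G (Fin G \<union> Y) q"
  using assms unfolding SRActs_def by auto

lemma SRActs_nonempty:
  assumes "wf_game G" "q \<in> St G"
  shows "\<exists>a. a \<in> SRActs G X Y q"
proof (cases "q \<in> S2 G \<inter> Win2 G (Fin G) - (Fin G \<union> Y)")
  case True
  then have "q \<in> Win2 G (Fin G \<union> Y)"
    using attr_mono_target[of "Fin G" "Fin G \<union> Y" G] unfolding Win2_def by blast
  moreover have "q \<notin> S1 G"
    using True wf_gameD(3)[OF assms(1)] by blast
  ultimately obtain a t where "Tr G q a = Some t" "rank G (Fin G \<union> Y) t < rank G (Fin G \<union> Y) q"
    using True by (metis Diff_iff IntD1 rank_decreases_existential)
  then show ?thesis
    using True unfolding SRActs_def by auto
next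
  case False
  then show ?thesis
    using wf_gameD(5)[OF assms] unfolding SRActs_def by auto
qed

subsection \<open>The region from which P1 lures P2 into the fake targets\<close>

text \<open>The roles of the players are swapped, so that the attractor of this game towards Z consists
  of the states from which P1 forces a visit to Z against every P2 that only plays actions
  rationalizable when Z are fake targets.\<close>
definition sr_dual_game :: "('s, 'a) game \<Rightarrow> 's set \<Rightarrow> ('s, 'a) game" where
  "sr_dual_game G Z = G\<lparr>S1 := S2 G, S2 := S1 G,
     Tr := \<lambda>x a. if x \<in> S2 G \<and> a \<notin> SRActs G {} Z x then None else Tr G x a\<rparr>"

definition lure_region :: "('s, 'a) game \<Rightarrow> 's set \<Rightarrow> 's set" where
  "lure_region G Z = Win2 (sr_dual_game G Z) Z"

lemma sr_dual_game_simps [simp]: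
  "S1 (sr_dual_game G Z) = S2 G" "S2 (sr_dual_game G Z) = S1 G"
  "Tr (sr_dual_game G Z) x a = (if x \<in> S2 G \<and> a \<notin> SRActs G {} Z x then None else Tr G x a)"
  by (simp_all add: sr_dual_game_def)

lemma subset_lure_region: "Z \<subseteq> lure_region G Z"
  unfolding lure_region_def by (rule subset_Win2)

lemma not_in_lure_region_P1:
  assumes "wf_game G" "x \<in> S1 G" "x \<notin> lure_region G Z" "Tr G x a = Some t"
  shows "t \<notin> lure_region G Z"
proof
  assume "t \<in> lure_region G Z"
  moreover have "x \<notin> S2 G"
    using assms(1,2) wf_gameD(3) by blast
  ultimately show False
    using assms(2-4) Win2_existential_closed[of x "sr_dual_game G Z" a t Z]
    unfolding lure_region_def by simp
qed

lemma not_in_lure_region_P2E: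
  assumes "wf_game G" "x \<in> S2 G" "x \<notin> lure_region G Z"
  obtains a t where "a \<in> SRActs G {} Z x" "Tr G x a = Some t" "t \<notin> lure_region G Z"
proof -
  let ?D = "sr_dual_game G Z"
  have dual_step: "Tr ?D x a = Some t \<longleftrightarrow> a \<in> SRActs G {} Z x \<and> Tr G x a = Some t" for a t
    using assms(2) by simp
  then have "{t. \<exists>a. Tr ?D x a = Some t} \<subseteq> {t. \<exists>a. Tr G x a = Some t}"
    by blast
  then have finite: "finite {t. \<exists>a. Tr ?D x a = Some t}"
    using wf_game_finite_successors[OF assms(1)] by (rule finite_subset)
  have "x \<in> lure_region G Z"
    if "\<And>a t. a \<in> SRActs G {} Z x \<Longrightarrow> Tr G x a = Some t \<Longrightarrow> t \<in> lure_region G Z"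
    unfolding lure_region_def
  proof (rule Win2_universal_closed[of x ?D Z])
    fix a t
    assume "Tr ?D x a = Some t"
    then show "t \<in> Win2 ?D Z"
      using that dual_step unfolding lure_region_def by blast
  qed (use assms(2) finite in simp_all)
  then show thesis
    using assms(3) that by blast
qed

lemma Win2_fake_targets_subset:
  assumes "wf_game G" "Z \<subseteq> Win2 G (Fin G)"
  shows "Win2 G (Fin G \<union> Z) \<subseteq> Win2 G (Fin G)"
  by (rule Win2_subset_Win2[OF wf_game_finite_successors[OF assms(1)]])
    (use assms(2) subset_Win2[of "Fin G" G] in blast)

lemma attr_Fin_outside_lure_region:
  assumes wf: "wf_game G" and Z: "Z \<subseteq> Win2 G (Fin G) - Fin G"
  shows "y \<notin> lure_region G Z \<Longrightarrow> y \<in> attr G (Fin G \<union> Z) k \<Longrightarrow> y \<in> attr G (Fin G) k"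
proof (induction k arbitrary: y)
  case 0
  then show ?case
    using subset_lure_region[of Z G] by auto
next
  case (Suc k)
  consider "y \<in> attr G (Fin G \<union> Z) k"
    | "y \<in> S1 G" "\<And>a t. Tr G y a = Some t \<Longrightarrow> t \<in> attr G (Fin G \<union> Z) k"
    | "y \<in> S2 G"
    using Suc.prems(2) by auto
  then show ?case
  proof cases
    case 1
    then show ?thesis
      using Suc by auto
  next
    case 2
    have "t \<in> attr G (Fin G) k" if "Tr G y a = Some t" for a t
      using Suc 2 that not_in_lure_region_P1[OF wf] by auto
    then show ?thesis
      using 2 by simp
  next
    case 3
    show ?thesis
    proof (cases "y \<in> Fin G")
      case True
      then have "y \<in> attr G (Fin G) 0"
        by simp
      then show ?thesis
        using monoD[OF incseq_attr[of G "Fin G"], of 0 "Suc k"] by blast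
    next
      case False
      obtain a t where a: "a \<in> SRActs G {} Z y" "Tr G y a = Some t" "t \<notin> lure_region G Z"
        using not_in_lure_region_P2E[OF wf 3 Suc.prems(1)] .
      have "y \<in> Win2 G (Fin G \<union> Z)"
        using Suc.prems(2) unfolding Win2_def by blast
      then have "y \<in> Win2 G (Fin G)"
        using Win2_fake_targets_subset[OF wf] Z by blast
      moreover have "y \<notin> Z"
        using Suc.prems(1) subset_lure_region[of Z G] by blast
      ultimately have "rank G (Fin G \<union> Z) t < rank G (Fin G \<union> Z) y"
        using 3 False by (intro SRActs_rank_less[OF _ a(1,2)]) simp
      also have "\<dots> \<le> enat (Suc k)"
        using Suc.prems(2) by (rule rank_le_enat_iff[THEN iffD2])
      finally have "rank G (Fin G \<union> Z) t \<le> enat k"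
        by (cases "rank G (Fin G \<union> Z) t") auto
      then have "t \<in> attr G (Fin G \<union> Z) k"
        by (rule rank_le_enat_iff[THEN iffD1])
      then show ?thesis
        using Suc.IH a 3 by auto
    qed
  qed
qed

lemma SRActs_fake_target_imp_trap:
  assumes "wf_game G" "Z \<subseteq> Win2 G (Fin G) - Fin G"
    and "a \<in> SRActs G {} Z x" "Tr G x a = Some t" "t \<notin> lure_region G Z" "x \<notin> Z"
  shows "a \<in> SRActs G Z {} x"
proof (cases "x \<in> S2 G \<inter> Win2 G (Fin G) - Fin G")
  case True
  have "rank G (Fin G) t \<le> rank G (Fin G \<union> Z) t"
    by (rule rank_le_rankI) (rule attr_Fin_outside_lure_region[OF assms(1,2,5)])
  also have "\<dots> < rank G (Fin G \<union> Z) x"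
    using True assms(6) by (intro SRActs_rank_less[OF _ assms(3,4)]) simp
  also have "\<dots> \<le> rank G (Fin G) x"
    by (rule rank_antimono_target) simp
  finally show ?thesis
    using True assms(4) unfolding SRActs_def by auto
next
  case False
  then show ?thesis
    using assms(3,6) unfolding SRActs_def by auto
qed

lemma lure_region_step_rank_less:
  assumes wf: "wf_game G" and x: "x \<in> Win2 (sr_dual_game G Z) Z" "x \<notin> Z"
    and P1: "x \<in> S1 G \<Longrightarrow> a = rank_strategy (sr_dual_game G Z) Z x"
    and P2: "x \<in> S2 G \<Longrightarrow> a \<in> SRActs G {} Z x"
    and step: "Tr G x a = Some t"
  shows "rank (sr_dual_game G Z) Z t < rank (sr_dual_game G Z) Z x"
proof -
  let ?D = "sr_dual_game G Z"
  have "x \<in> S1 G \<and> x \<notin> S2 G \<or> x \<in> S2 G \<and> x \<notin> S1 G"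
    using x attr_subset[of ?D Z] wf_gameD(3)[OF wf] unfolding Win2_def by auto
  then show ?thesis
  proof
    assume S1: "x \<in> S1 G \<and> x \<notin> S2 G"
    obtain a' t' where "Tr ?D x a' = Some t'" "rank ?D Z t' < rank ?D Z x"
      by (rule rank_decreases_existential[of x ?D Z]) (use S1 x in simp_all)
    then show ?thesis
      using rank_strategy_decreases[of ?D x a' t' Z] S1 P1 step by auto
  next
    assume S2: "x \<in> S2 G \<and> x \<notin> S1 G"
    then have "Tr ?D x a = Some t"
      using P2 step by simp
    then show ?thesis
      using rank_decreases_universal[of x ?D Z] S2 x by simp
  qed
qed

lemma lure_region_play_reaches_fake_target:
  assumes wf: "wf_game G" and s: "s \<in> lure_region G Z"
    and \<pi>2: "sr_strategy2 G {} Z \<pi>2"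
    and play: "is_play G {} Z (rank_strategy (sr_dual_game G Z) Z) \<pi>2 s \<rho>"
  shows "\<exists>n. \<rho> n \<in> Z"
proof (rule rank_descent_reaches_target[of \<rho> "sr_dual_game G Z" Z])
  show "\<rho> 0 \<in> Win2 (sr_dual_game G Z) Z"
    using s play unfolding lure_region_def is_play_def by simp
next
  fix n
  let ?a = "(if \<rho> n \<in> S1 G then rank_strategy (sr_dual_game G Z) Z else \<pi>2) (\<rho> n)"
  assume win: "\<rho> n \<in> Win2 (sr_dual_game G Z) Z" and "\<rho> n \<notin> Z"
  then have step: "Tr G (\<rho> n) ?a = Some (\<rho> (Suc n))"
    using play unfolding is_play_def Tr_true_def by (metis Un_empty_left)
  have rational: "?a \<in> SRActs G {} Z (\<rho> n)" if "\<rho> n \<in> S2 G"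
    using that \<pi>2 wf_gameD(3)[OF wf] unfolding sr_strategy2_def by auto
  show "rank (sr_dual_game G Z) Z (\<rho> (Suc n)) < rank (sr_dual_game G Z) Z (\<rho> n)"
    by (rule lure_region_step_rank_less[OF wf win \<open>\<rho> n \<notin> Z\<close> _ rational step]) simp
qed

lemma stealthy_dsw_rank_strategy:
  assumes wf: "wf_game G" and s: "s \<in> lure_region G Z"
  shows "stealthy_dsw G {} Z (rank_strategy (sr_dual_game G Z) Z) s"
  unfolding stealthy_dsw_def
proof (intro conjI allI impI)
  show "sr_strategy1 G {} Z (rank_strategy (sr_dual_game G Z) Z)"
    unfolding sr_strategy1_def
  proof
    fix q
    assume q: "q \<in> S1 G"
    then have "q \<notin> S2 G"
      using wf_gameD(3)[OF wf] by blast
    moreover obtain a where "enabled G q a"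
      using wf_gameD(2,5)[OF wf] q by blast
    ultimately have "enabled G q (rank_strategy (sr_dual_game G Z) Z q)"
      using rank_strategy_enabled[of "sr_dual_game G Z" q a Z] unfolding enabled_def by simp
    then show "rank_strategy (sr_dual_game G Z) Z q \<in> SRActs G {} Z q"
      using \<open>q \<notin> S2 G\<close> unfolding SRActs_def by simp
  qed
next
  fix \<pi>2 \<rho>
  assume "sr_strategy2 G {} Z \<pi>2" "is_play G {} Z (rank_strategy (sr_dual_game G Z) Z) \<pi>2 s \<rho>"
  then show "\<exists>n. \<rho> n \<in> {} \<union> Z"
    using lure_region_play_reaches_fake_target[OF wf s] by simp
qed

lemma trap_strategy_escaping_lure_region:
  assumes wf: "wf_game G" and Z: "Z \<subseteq> Win2 G (Fin G) - Fin G"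
  obtains \<pi>2 where "sr_strategy2 G Z {} \<pi>2"
    and "\<And>x. x \<in> S2 G \<Longrightarrow> x \<notin> lure_region G Z \<Longrightarrow>
           \<exists>t. Tr G x (\<pi>2 x) = Some t \<and> t \<notin> lure_region G Z"
proof -
  have "\<exists>a. a \<in> SRActs G Z {} x \<and>
      (x \<notin> lure_region G Z \<longrightarrow> (\<exists>t. Tr G x a = Some t \<and> t \<notin> lure_region G Z))"
    if x: "x \<in> S2 G" for x
  proof (cases "x \<in> lure_region G Z")
    case True
    then show ?thesis
      using SRActs_nonempty[OF wf] wf_gameD(2)[OF wf] x by blast
  next
    case False
    then obtain a t where "a \<in> SRActs G {} Z x" "Tr G x a = Some t" "t \<notin> lure_region G Z"
      using not_in_lure_region_P2E[OF wf x] by blast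
    moreover have "x \<notin> Z"
      using False subset_lure_region[of Z G] by blast
    ultimately show ?thesis
      using SRActs_fake_target_imp_trap[OF wf Z] by blast
  qed
  then obtain \<pi>2 where "\<And>x. x \<in> S2 G \<Longrightarrow> \<pi>2 x \<in> SRActs G Z {} x \<and>
      (x \<notin> lure_region G Z \<longrightarrow> (\<exists>t. Tr G x (\<pi>2 x) = Some t \<and> t \<notin> lure_region G Z))"
    by metis
  then show thesis
    using that unfolding sr_strategy2_def by blast
qed

lemma trap_play_step_outside_lure_region:
  assumes wf: "wf_game G" and \<pi>1: "sr_strategy1 G Z {} \<pi>1"
    and escape: "\<And>x. x \<in> S2 G \<Longrightarrow> x \<notin> lure_region G Z \<Longrightarrow>
           \<exists>t. Tr G x (\<pi>2 x) = Some t \<and> t \<notin> lure_region G Z"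
    and x: "x \<in> St G - lure_region G Z"
  shows "\<exists>t \<in> St G - lure_region G Z. Tr_true G Z {} x ((if x \<in> S1 G then \<pi>1 else \<pi>2) x) = Some t"
proof -
  have "x \<notin> Z"
    using x subset_lure_region[of Z G] by blast
  then have true_step: "Tr_true G Z {} x b = Tr G x b" for b
    unfolding Tr_true_def by simp
  have "\<exists>t. Tr G x ((if x \<in> S1 G then \<pi>1 else \<pi>2) x) = Some t \<and> t \<notin> lure_region G Z"
    (is "\<exists>t. Tr G x ?a = Some t \<and> _")
  proof (cases "x \<in> S1 G")
    case True
    then have "\<pi>1 x \<in> SRActs G Z {} x"
      using \<pi>1 unfolding sr_strategy1_def by blast
    then have "enabled G x (\<pi>1 x)"
      by (rule SRActs_enabled)
    then obtain t where "Tr G x (\<pi>1 x) = Some t"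
      unfolding enabled_def by blast
    then show ?thesis
      using not_in_lure_region_P1[OF wf True] x True by auto
  next
    case False
    then have "x \<in> S2 G"
      using x wf_gameD(2)[OF wf] by blast
    then show ?thesis
      using escape x False by auto
  qed
  then obtain t where t: "Tr G x ?a = Some t" "t \<notin> lure_region G Z"
    by blast
  moreover have "t \<in> St G"
    using wf_gameD(4)[OF wf t(1)] .
  ultimately show ?thesis
    unfolding true_step by blast
qed

lemma not_stealthy_dsw_outside_lure_region:
  assumes wf: "wf_game G" and Z: "Z \<subseteq> Win2 G (Fin G) - Fin G"
    and s: "s \<in> St G" "s \<notin> lure_region G Z"
  shows "\<not> stealthy_dsw G Z {} \<pi>1 s"
proof
  assume stealthy: "stealthy_dsw G Z {} \<pi>1 s"
  then have \<pi>1: "sr_strategy1 G Z {} \<pi>1"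
    unfolding stealthy_dsw_def by blast
  obtain \<pi>2 where \<pi>2: "sr_strategy2 G Z {} \<pi>2"
    and escape: "\<And>x. x \<in> S2 G \<Longrightarrow> x \<notin> lure_region G Z \<Longrightarrow>
           \<exists>t. Tr G x (\<pi>2 x) = Some t \<and> t \<notin> lure_region G Z"
    using trap_strategy_escaping_lure_region[OF wf Z] by blast
  obtain \<rho> where "is_play G Z {} \<pi>1 \<pi>2 s \<rho>" "\<And>n. \<rho> n \<in> St G - lure_region G Z"
    using play_in_invariant[of s "St G - lure_region G Z"] s
      trap_play_step_outside_lure_region[OF wf \<pi>1 escape] by blast
  moreover have "\<rho> n \<notin> Z \<union> {}" if "\<rho> n \<in> St G - lure_region G Z" for n
    using that subset_lure_region[of Z G] by blast
  ultimately show False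
    using stealthy \<pi>2 unfolding stealthy_dsw_def by blast
qed

theorem theorem2:
  fixes G :: "('s, 'a) game" and Z :: "'s set"
  assumes "wf_game G"
    and "Z \<subseteq> Win2 G (Fin G) - Fin G"
  shows "DSWin1 G Z {} \<subseteq> DSWin1 G {} Z"
proof
  fix s
  assume "s \<in> DSWin1 G Z {}"
  then obtain \<pi>1 where s: "s \<in> St G" "stealthy_dsw G Z {} \<pi>1 s"
    unfolding DSWin1_def by blast
  then have "s \<in> lure_region G Z"
    using not_stealthy_dsw_outside_lure_region[OF assms] by blast
  then show "s \<in> DSWin1 G {} Z"
    unfolding DSWin1_def using stealthy_dsw_rank_strategy[OF assms(1)] s(1) by blast
qed

end
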